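(* Let $X$ be a real Banach space with dual $X^*$, let $A\colon X\rightrightarrows X^*$ be a set-valued operator, let $C$ be a nonempty closed convex subset of $X$, and let $(z,z^* )\in X\times X^*$. Define $I_C\colon X\rightrightarrows X^*$ by $I_C(x)=\{0\}$ if $x\in C$ and $I_C(x)=\varnothing$ otherwise, and for $a\in C$ let $T_C(a)=\{x\in X:\sup\langle x,N_C(a)\rangle\le 0\}$. Then $(z,z^* )$ is monotonically related to $\operatorname{gra}(A+N_C)$ if and only if $(z,z^* )$ is monotonically related to $\operatorname{gra}(A+I_C)$ and $z\in\bigcap_{a\in\operatorname{dom}A\cap C}\big(a+T_C(a)\big)$.
   Context: $\langle\cdot,\cdot\rangle$ is the pairing between $X$ and $X^*$. For $B\colon X\rightrightarrows X^*$, $\operatorname{gra}B=\{(x,x^* ): x^*\in Bx\}$, $\operatorname{dom}B=\{x: Bx\neq\varnothing\}$, and sums are $(B_1+B_2)x=\{b_1^*+b_2^*: b_1^*\in B_1x,\ b_2^*\in B_2x\}$. A point $(z,z^* )$ is monotonically related to a set $G\subseteq X\times X^*$ if $\langle x-z,x^*-z^*\rangle\ge 0$ for all $(x,x^* )\in G$. The normal cone operator is $N_C(x)=\{x^*\in X^*:\sup_{c\in C}\langle c-x,x^*\rangle\le 0\}$ for $x\in C$ and $N_C(x)=\varnothing$ for $x\notin C$. *)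

theory Defs
  imports "HOL-Analysis.Analysis"
begin

text \<open>The dual space X* is modelled as the type of bounded linear functionals (blinfun);
  the pairing is blinfun_apply.\<close>

definition pairing :: "'a::real_normed_vector \<Rightarrow> ('a \<Rightarrow>\<^sub>L real) \<Rightarrow> real" where
  "pairing x xs = blinfun_apply xs x"

definition gra :: "('a \<Rightarrow> 'b set) \<Rightarrow> ('a \<times> 'b) set" where
  "gra B = {(x, xs). xs \<in> B x}"

definition dom_op :: "('a \<Rightarrow> 'b set) \<Rightarrow> 'a set" where
  "dom_op B = {x. B x \<noteq> {}}"

definition op_sum :: "('a \<Rightarrow> 'b::plus set) \<Rightarrow> ('a \<Rightarrow> 'b set) \<Rightarrow> 'a \<Rightarrow> 'b set" where
  "op_sum B1 B2 x = {b1 + b2 | b1 b2. b1 \<in> B1 x \<and> b2 \<in> B2 x}"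

definition mono_related ::
  "('a::real_normed_vector \<times> ('a \<Rightarrow>\<^sub>L real)) \<Rightarrow> ('a \<times> ('a \<Rightarrow>\<^sub>L real)) set \<Rightarrow> bool" where
  "mono_related p G = (\<forall>(x, xs) \<in> G. pairing (x - fst p) (xs - snd p) \<ge> 0)"

definition normal_cone :: "'a::real_normed_vector set \<Rightarrow> 'a \<Rightarrow> ('a \<Rightarrow>\<^sub>L real) set" where
  "normal_cone C x = (if x \<in> C then {xs. \<forall>c \<in> C. pairing (c - x) xs \<le> 0} else {})"

definition indicator_op :: "'a::real_normed_vector set \<Rightarrow> 'a \<Rightarrow> ('a \<Rightarrow>\<^sub>L real) set" where
  "indicator_op C x = (if x \<in> C then {0} else {})"

text \<open>T_C(a) = {x. sup <x, N_C(a)> \<le> 0}, written pointwise.\<close>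
definition tangent_cone :: "'a::real_normed_vector set \<Rightarrow> 'a \<Rightarrow> 'a set" where
  "tangent_cone C a = {x. \<forall>xs \<in> normal_cone C a. pairing x xs \<le> 0}"

end

theory Submission
  imports Defs
begin

text \<open>Monotone relatedness to \<open>gra (A + B)\<close> is a pointwise inequality in the summand from
  \<open>B x\<close>. For \<open>B = I\<^sub>C\<close> that summand is \<open>0\<close>; for \<open>B = N\<^sub>C\<close> it ranges over a cone, and an affine
  function \<open>\<alpha> + f n\<close> with \<open>f\<close> linear is nonnegative on a cone exactly when \<open>\<alpha> \<ge> 0\<close> and
  \<open>f \<ge> 0\<close> there (scale \<open>n\<close> up). The condition \<open>f \<ge> 0\<close> on \<open>N\<^sub>C(a)\<close> with \<open>f n = \<langle>a - z, n\<rangle>\<close>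
  is \<open>z \<in> a + T\<^sub>C(a)\<close>.\<close>

lemma nonneg_add_linear_on_cone_iff:
  fixes f :: "'b::real_vector \<Rightarrow> real"
  assumes "linear f" and "0 \<in> K" and cone: "\<And>n t. n \<in> K \<Longrightarrow> 0 \<le> t \<Longrightarrow> t *\<^sub>R n \<in> K"
  shows "(\<forall>n \<in> K. 0 \<le> \<alpha> + f n) \<longleftrightarrow> 0 \<le> \<alpha> \<and> (\<forall>n \<in> K. 0 \<le> f n)"
proof (intro iffI conjI ballI)
  assume nonneg: "\<forall>n \<in> K. 0 \<le> \<alpha> + f n"
  show "0 \<le> \<alpha>"
    using nonneg \<open>0 \<in> K\<close> linear_0[OF \<open>linear f\<close>] by fastforce
  fix n assume "n \<in> K"
  show "0 \<le> f n"
  proof (rule ccontr)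
    assume "\<not> 0 \<le> f n"
    define t where "t = (\<bar>\<alpha>\<bar> + 1) / - f n"
    have "0 \<le> t" using \<open>\<not> 0 \<le> f n\<close> by (simp add: t_def divide_nonneg_neg)
    then have "0 \<le> \<alpha> + t * f n"
      using nonneg cone[OF \<open>n \<in> K\<close>] linear_scale[OF \<open>linear f\<close>] by fastforce
    moreover have "t * f n = - (\<bar>\<alpha>\<bar> + 1)" using \<open>\<not> 0 \<le> f n\<close> by (simp add: t_def)
    ultimately show False by linarith
  qed
qed auto

lemma mono_related_gra_op_sum_iff:
  "mono_related (z, zs) (gra (op_sum A B)) \<longleftrightarrow>
     (\<forall>x. \<forall>a \<in> A x. \<forall>b \<in> B x. 0 \<le> pairing (x - z) (a - zs) + pairing (x - z) b)"
  unfolding mono_related_def gra_def op_sum_def pairing_def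
  by (fastforce simp: blinfun.diff_left blinfun.add_left algebra_simps)

lemma mono_related_gra_op_sum_indicator_op_iff:
  "mono_related (z, zs) (gra (op_sum A (indicator_op C))) \<longleftrightarrow>
     (\<forall>x \<in> C. \<forall>a \<in> A x. 0 \<le> pairing (x - z) (a - zs))"
  by (auto simp: mono_related_gra_op_sum_iff indicator_op_def pairing_def)

lemma zero_in_normal_cone: "x \<in> C \<Longrightarrow> 0 \<in> normal_cone C x"
  by (simp add: normal_cone_def pairing_def)

lemma scaleR_in_normal_cone:
  "n \<in> normal_cone C x \<Longrightarrow> 0 \<le> t \<Longrightarrow> t *\<^sub>R n \<in> normal_cone C x"
  by (auto simp: normal_cone_def pairing_def blinfun.scaleR_left mult_nonneg_nonpos split: if_splits)

lemma normal_cone_memD: "n \<in> normal_cone C x \<Longrightarrow> x \<in> C"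
  by (simp add: normal_cone_def split: if_splits)

lemma mem_translate_tangent_cone_iff:
  "z \<in> (\<lambda>t. a + t) ` tangent_cone C a \<longleftrightarrow> (\<forall>n \<in> normal_cone C a. 0 \<le> pairing (a - z) n)"
proof -
  have "z \<in> (\<lambda>t. a + t) ` tangent_cone C a \<longleftrightarrow> z - a \<in> tangent_cone C a"
    by (auto intro: image_eqI[of _ _ "z - a"])
  also have "\<dots> \<longleftrightarrow> (\<forall>n \<in> normal_cone C a. 0 \<le> pairing (a - z) n)"
    by (simp add: tangent_cone_def pairing_def blinfun.diff_right)
  finally show ?thesis .
qed

lemma linear_pairing_right: "linear (pairing x)"
  unfolding pairing_def using blinfun.bounded_linear_left by (rule bounded_linear.linear)

theorem lemma2p6:
  fixes A :: "'a::banach \<Rightarrow> ('a \<Rightarrow>\<^sub>L real) set"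
    and C :: "'a set"
    and z :: 'a and zs :: "'a \<Rightarrow>\<^sub>L real"
  assumes "C \<noteq> {}" and "closed C" and "convex C"
  shows "mono_related (z, zs) (gra (op_sum A (normal_cone C))) \<longleftrightarrow>
           (mono_related (z, zs) (gra (op_sum A (indicator_op C))) \<and>
            z \<in> (\<Inter>a \<in> dom_op A \<inter> C. (\<lambda>t. a + t) ` tangent_cone C a))"
proof -
  have split_at: "(\<forall>n \<in> normal_cone C x. 0 \<le> pairing (x - z) (a - zs) + pairing (x - z) n)
      \<longleftrightarrow> 0 \<le> pairing (x - z) (a - zs) \<and> (\<forall>n \<in> normal_cone C x. 0 \<le> pairing (x - z) n)"
    if "x \<in> C" for x a
    using nonneg_add_linear_on_cone_iff[OF linear_pairing_right zero_in_normal_cone[OF that]]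
      scaleR_in_normal_cone by blast
  have "mono_related (z, zs) (gra (op_sum A (normal_cone C))) \<longleftrightarrow>
      (\<forall>x \<in> C. \<forall>a \<in> A x. \<forall>n \<in> normal_cone C x. 0 \<le> pairing (x - z) (a - zs) + pairing (x - z) n)"
    by (auto simp: mono_related_gra_op_sum_iff dest: normal_cone_memD)
  also have "\<dots> \<longleftrightarrow> (\<forall>x \<in> C. \<forall>a \<in> A x. 0 \<le> pairing (x - z) (a - zs)) \<and>
      (\<forall>x \<in> dom_op A \<inter> C. \<forall>n \<in> normal_cone C x. 0 \<le> pairing (x - z) n)"
    by (auto simp: split_at dom_op_def)
  also have "\<dots> \<longleftrightarrow> mono_related (z, zs) (gra (op_sum A (indicator_op C))) \<and>
      z \<in> (\<Inter>a \<in> dom_op A \<inter> C. (\<lambda>t. a + t) ` tangent_cone C a)"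
    by (simp add: mono_related_gra_op_sum_indicator_op_iff mem_translate_tangent_cone_iff)
  finally show ?thesis .
qed

end
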